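(* The ratio $\frac{\psi_2(x)}{\psi_1(x)}$ is strictly increasing for $x\ge1$.
   Context: For $x\ge1$, $\psi_1(x)=\frac32\int_0^{\pi/2}(1-x^{-2}\sin^2u)^{3/2}\,du$ and $\psi_2(x)=\frac32(1-x^{-2})^2\int_0^{\pi/2}\frac{\sin^4v}{\sqrt{1-(1-x^{-2})\sin^2v}}\,dv$. *)

theory Defs
  imports "HOL-Analysis.Analysis"
begin

definition psi1 :: "real \<Rightarrow> real" where
  "psi1 x = 3/2 * integral {0..pi/2} (\<lambda>u. (1 - sin u ^ 2 / x ^ 2) powr (3/2))"

definition psi2 :: "real \<Rightarrow> real" where
  "psi2 x = 3/2 * (1 - 1 / x ^ 2) ^ 2 *
     integral {0..pi/2} (\<lambda>v. sin v ^ 4 / sqrt (1 - (1 - 1 / x ^ 2) * sin v ^ 2))"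

end

theory Submission
  imports Defs
begin

text \<open>
  With \<open>k = 1 - 1/x\<^sup>2\<close>, which increases from 0 to 1 on \<open>[1, \<infinity>)\<close>, one has
  \<open>\<psi>\<^sub>1 = 3/2 J\<^sub>1(k)\<close> and \<open>\<psi>\<^sub>2 = 3/2 k\<^sup>2 J\<^sub>2(k)\<close>, where \<open>J\<^sub>1\<close> (psi1_integral) integrates
  \<open>(cos\<^sup>2u + k sin\<^sup>2u)\<^sup>3\<^sup>/\<^sup>2\<close> and \<open>J\<^sub>2\<close> (psi2_integral) integrates \<open>sin\<^sup>4v / (1 - k sin\<^sup>2v)\<^sup>1\<^sup>/\<^sup>2\<close>
  over \<open>[0, \<pi>/2]\<close>. \<open>J\<^sub>2\<close> is increasing, and \<open>J\<^sub>1(k)/k\<^sup>3\<^sup>/\<^sup>2\<close> is decreasing because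
  \<open>(cos\<^sup>2u + k sin\<^sup>2u)/k = cos\<^sup>2u/k + sin\<^sup>2u\<close> is. Hence for \<open>k < l\<close> the ratio
  \<open>k\<^sup>2 J\<^sub>2(k)/J\<^sub>1(k)\<close> grows at least by the factor \<open>(l/k)\<^sup>1\<^sup>/\<^sup>2 > 1\<close>.
\<close>

lemma powr_three_halves:
  fixes r :: real
  assumes "0 \<le> r"
  shows "r powr (3/2) = sqrt r ^ 3"
proof -
  have "r powr (3/2) = (r powr (1/2)) powr 3"
    by (simp add: powr_powr)
  with assms show ?thesis
    by (simp add: powr_half_sqrt)
qed

definition psi1_integral :: "real \<Rightarrow> real" where
  "psi1_integral k = integral {0..pi/2} (\<lambda>u. (1 - (1 - k) * sin u ^ 2) powr (3/2))"

definition psi2_integral :: "real \<Rightarrow> real" where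
  "psi2_integral k = integral {0..pi/2} (\<lambda>v. sin v ^ 4 / sqrt (1 - k * sin v ^ 2))"

lemma psi_ratio_eq:
  "psi2 x / psi1 x = (1 - 1 / x ^ 2) ^ 2 * psi2_integral (1 - 1 / x ^ 2) / psi1_integral (1 - 1 / x ^ 2)"
  by (simp add: psi1_def psi2_def psi1_integral_def psi2_integral_def)

lemma one_minus_mult_sin_power2_pos:
  fixes k u :: real
  assumes "k < 1"
  shows "0 < 1 - k * sin u ^ 2"
proof (cases "k \<le> 0")
  case True
  then have "k * sin u ^ 2 \<le> 0" by (simp add: mult_nonpos_nonneg)
  then show ?thesis by simp
next
  case False
  then have "k * sin u ^ 2 \<le> k"
    by (simp add: mult_left_le abs_square_le_1)
  with assms show ?thesis by simp
qed

lemma continuous_on_psi1_integrand: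
  fixes k :: real
  assumes "0 < k"
  shows "continuous_on A (\<lambda>u. (1 - (1 - k) * sin u ^ 2) powr (3/2))"
  using one_minus_mult_sin_power2_pos[of "1 - k"] assms
  by (intro continuous_intros) (auto simp: less_le)

lemma continuous_on_psi2_integrand:
  fixes k :: real
  assumes "k < 1"
  shows "continuous_on A (\<lambda>v. sin v ^ 4 / sqrt (1 - k * sin v ^ 2))"
  using one_minus_mult_sin_power2_pos[OF assms]
  by (intro continuous_intros) (auto simp: less_le)

lemma psi1_integral_pos:
  assumes "0 < k"
  shows "0 < psi1_integral k"
proof -
  have "0 < (1 - (1 - k) * sin u ^ 2) powr (3/2)" for u
    using one_minus_mult_sin_power2_pos[of "1 - k" u] assms by simp
  then have "integral {0..pi/2} (\<lambda>_. 0) < psi1_integral k"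
    unfolding psi1_integral_def cbox_interval[symmetric] using continuous_on_psi1_integrand[OF assms]
    by (intro integral_less) (auto simp: not_le)
  then show ?thesis by simp
qed

lemma psi2_integral_pos:
  assumes "k < 1"
  shows "0 < psi2_integral k"
proof -
  have "0 < sin v ^ 4 / sqrt (1 - k * sin v ^ 2)" if "0 < v" "v < pi/2" for v
    using sin_gt_zero[of v] that one_minus_mult_sin_power2_pos[OF assms, of v] by simp
  then have "integral {0..pi/2} (\<lambda>_. 0) < psi2_integral k"
    unfolding psi2_integral_def cbox_interval[symmetric] using continuous_on_psi2_integrand[OF assms]
    by (intro integral_less) (auto simp: not_le)
  then show ?thesis by simp
qed

lemma psi2_integral_mono:
  assumes "k \<le> l" "l < 1"
  shows "psi2_integral k \<le> psi2_integral l"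
  unfolding psi2_integral_def
proof (rule integral_le)
  show "(\<lambda>v. sin v ^ 4 / sqrt (1 - k * sin v ^ 2)) integrable_on {0..pi/2}"
       "(\<lambda>v. sin v ^ 4 / sqrt (1 - l * sin v ^ 2)) integrable_on {0..pi/2}"
    using assms by (auto intro!: integrable_continuous_interval continuous_on_psi2_integrand)
  fix v :: real
  have "sqrt (1 - l * sin v ^ 2) \<le> sqrt (1 - k * sin v ^ 2)"
    using assms by (simp add: mult_right_mono)
  moreover have "0 < sqrt (1 - l * sin v ^ 2)"
    using one_minus_mult_sin_power2_pos[OF assms(2)] by simp
  ultimately show "sin v ^ 4 / sqrt (1 - k * sin v ^ 2) \<le> sin v ^ 4 / sqrt (1 - l * sin v ^ 2)"
    by (simp add: divide_left_mono)
qed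

lemma psi1_integral_le_powr:
  assumes "0 < k" "k \<le> l"
  shows "psi1_integral l \<le> (l / k) powr (3/2) * psi1_integral k"
  unfolding psi1_integral_def
proof (subst integral_mult_right[symmetric], rule integral_le)
  show "(\<lambda>u. (1 - (1 - l) * sin u ^ 2) powr (3/2)) integrable_on {0..pi/2}"
       "(\<lambda>u. (l / k) powr (3/2) * (1 - (1 - k) * sin u ^ 2) powr (3/2)) integrable_on {0..pi/2}"
    using assms by (auto intro!: integrable_continuous_interval continuous_on_psi1_integrand
                         continuous_on_mult_left)
  fix u :: real
  have "k * (1 - sin u ^ 2) \<le> l * (1 - sin u ^ 2)"
    using assms by (simp add: mult_right_mono abs_square_le_1)
  then have "1 - (1 - l) * sin u ^ 2 \<le> l / k * (1 - (1 - k) * sin u ^ 2)"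
    using assms by (simp add: field_simps)
  then have "(1 - (1 - l) * sin u ^ 2) powr (3/2) \<le> (l / k * (1 - (1 - k) * sin u ^ 2)) powr (3/2)"
    using one_minus_mult_sin_power2_pos[of "1 - l" u] assms by (intro powr_mono2) auto
  then show "(1 - (1 - l) * sin u ^ 2) powr (3/2) \<le> (l / k) powr (3/2) * (1 - (1 - k) * sin u ^ 2) powr (3/2)"
    by (simp only: powr_mult)
qed

lemma strict_mono_on_psi_integral_ratio:
  "strict_mono_on {0..<1} (\<lambda>k. k ^ 2 * psi2_integral k / psi1_integral k)"
proof (rule strict_mono_onI)
  fix k l :: real
  assume "k \<in> {0..<1}" "l \<in> {0..<1}" "k < l"
  then have l: "0 < l" "l < 1" and k: "0 \<le> k" "k < l" by auto
  have J1l: "0 < psi1_integral l" and J2l: "0 < psi2_integral l"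
    using l by (auto intro: psi1_integral_pos psi2_integral_pos)
  show "k ^ 2 * psi2_integral k / psi1_integral k < l ^ 2 * psi2_integral l / psi1_integral l"
  proof (cases "k = 0")
    case True
    then show ?thesis using l J1l J2l by simp
  next
    case False
    then have "0 < k" using k by simp
    define s where "s = sqrt (l / k)"
    have s: "1 < s" "l = s ^ 2 * k"
      using \<open>0 < k\<close> k by (simp_all add: s_def)
    have "(l / k) powr (3/2) = s ^ 3"
      unfolding s_def using \<open>0 < k\<close> k by (intro powr_three_halves) simp
    then have J1: "0 < psi1_integral k" "psi1_integral l \<le> s ^ 3 * psi1_integral k"
      using psi1_integral_pos psi1_integral_le_powr[of k l] \<open>0 < k\<close> k by simp_all
    have J2: "0 < psi2_integral k" "psi2_integral k \<le> psi2_integral l"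
      using k l by (simp_all add: psi2_integral_pos psi2_integral_mono)
    have "0 < k ^ 2 * psi2_integral k / psi1_integral k"
      using J1 J2 \<open>0 < k\<close> by simp
    from mult_strict_right_mono[OF s(1) this]
    have "k ^ 2 * psi2_integral k / psi1_integral k < s * (k ^ 2 * psi2_integral k / psi1_integral k)"
      by simp
    also have "\<dots> = l ^ 2 * psi2_integral k / (s ^ 3 * psi1_integral k)"
      using s J1(1) \<open>0 < k\<close> by (simp add: field_simps power2_eq_square power3_eq_cube)
    also have "\<dots> \<le> l ^ 2 * psi2_integral k / psi1_integral l"
      using J1 J1l J2 by (intro divide_left_mono) simp_all
    also have "\<dots> \<le> l ^ 2 * psi2_integral l / psi1_integral l"
      using J1l J2 by (intro divide_right_mono mult_left_mono) simp_all
    finally show ?thesis .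
  qed
qed

theorem mainTheorem18:
  shows "strict_mono_on {1..} (\<lambda>x. psi2 x / psi1 x)"
proof (rule strict_mono_onI)
  fix x y :: real
  assume "x \<in> {1..}" "y \<in> {1..}" "x < y"
  then have "1 \<le> x ^ 2" "x ^ 2 < y ^ 2"
    by (auto intro: one_le_power power_strict_mono)
  moreover from this have "1 / y ^ 2 < 1 / x ^ 2"
    by (intro divide_strict_left_mono mult_pos_pos) auto
  ultimately have "1 - 1 / x ^ 2 \<in> {0..<1}" "1 - 1 / y ^ 2 \<in> {0..<1}" "1 - 1 / x ^ 2 < 1 - 1 / y ^ 2"
    by (auto simp: divide_le_eq_1)
  then show "psi2 x / psi1 x < psi2 y / psi1 y"
    unfolding psi_ratio_eq by (rule strict_mono_onD[OF strict_mono_on_psi_integral_ratio])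
qed

end
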